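(* Let $q\ge2$ be fixed and let $r^*(n)$ be the minimum redundancy of a classical $(n,2;\mathcal{D}_1)_q$-reconstruction code in $\Sigma_q^n$. Then, as $n\to\infty$, $$\log_q\log_q n-\log_q2-o(1)\le r^*(n)\le\log_q\log_q n+\min\{\log_q(q-1)-\log_q2,0\}+o(1).$$
   Context: $\Sigma_q=\{0,\dots,q-1\}$. $\mathcal{D}_1(\boldsymbol{x})$ is the set of sequences obtained from $\boldsymbol{x}\in\Sigma_q^n$ by deleting exactly one symbol; $\mathcal{C}\subseteq\Sigma_q^n$ is a classical $(n,2;\mathcal{D}_1)_q$-reconstruction code if $|\mathcal{D}_1(\boldsymbol{x})\cap\mathcal{D}_1(\boldsymbol{y})|\le1$ for all distinct $\boldsymbol{x},\boldsymbol{y}\in\mathcal{C}$. Redundancy: $r(\mathcal{C})=n-\log_q|\mathcal{C}|$. *)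

theory Defs
  imports Complex_Main
begin

definition words :: "nat \<Rightarrow> nat \<Rightarrow> nat list set" where
  "words q n = {x. length x = n \<and> set x \<subseteq> {..<q}}"

definition del1 :: "nat list \<Rightarrow> nat list set" where
  "del1 x = {take i x @ drop (Suc i) x | i. i < length x}"

definition recon_code :: "nat \<Rightarrow> nat \<Rightarrow> nat list set \<Rightarrow> bool" where
  "recon_code q n C \<longleftrightarrow> C \<subseteq> words q n \<and>
     (\<forall>x\<in>C. \<forall>y\<in>C. x \<noteq> y \<longrightarrow> card (del1 x \<inter> del1 y) \<le> 1)"

definition redundancy :: "nat \<Rightarrow> nat \<Rightarrow> nat list set \<Rightarrow> real" where
  "redundancy q n C = real n - log q (real (card C))"

definition min_redundancy :: "nat \<Rightarrow> nat \<Rightarrow> real" where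
  "min_redundancy q n = Inf {redundancy q n C | C. recon_code q n C \<and> C \<noteq> {}}"

end

theory Submission
  imports Defs "HOL-Real_Asymp.Real_Asymp"
begin

text \<open>
  Two distinct words of equal length have two common single deletions exactly when they differ
  by an alternating swap: on a segment [p, s] with p < s one reads a b a b ... and the other
  b a b a ..., and they agree elsewhere.

  Upper bound: drop the words containing a 2-periodic window of length W, about
  log n + sqrt (log n) (a vanishing fraction of all words), and fix the sum of the symbols at
  even positions modulo some m > W/2 that is coprime to 1, ..., q - 1. An alternating swap
  shorter than W changes that sum by N (a - b) with 0 < N \<le> W/2, which m does not divide.
  Choosing m = k (q - 1)! + 1 close to W/2 and the best residue gives redundancy
  log_q log_q n - log_q 2 + o(1).

  Lower bound: for a \<noteq> b, the words consisting of an alternating prefix a b a b ... of length L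
  whose phase is reversed at some even position, followed by a fixed suffix, are pairwise
  confusable, so a code contains at most one of them. Cutting the words into B blocks of
  length L, about log n - sqrt (log n), and recursing on the suffixes gives
  |C| \<le> q^n (1/h + (1 - \<rho>)^B), where h \<approx> L/2 counts the phase positions and \<rho> is the density
  of phase-shifted prefixes; this is q^n (2 + o(1)) / log_q n.

  So in fact r*(n) = log_q log_q n - log_q 2 + o(1); the upper bound in the statement is weaker
  because its minimum is at least -log_q 2.
\<close>

section \<open>Words and single deletions\<close>

lemma finite_words: "finite (words q n)"
  unfolding words_def using finite_lists_length_eq[of "{..<q}" n] by (simp add: conj_commute)

lemma card_words: "card (words q n) = q ^ n"
  unfolding words_def using card_lists_length_eq[of "{..<q}" n] by (simp add: conj_commute)

definition delete_at :: "'a list \<Rightarrow> nat \<Rightarrow> 'a list" where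
  "delete_at x i = take i x @ drop (Suc i) x"

lemma length_delete_at: "i < length x \<Longrightarrow> length (delete_at x i) = length x - 1"
  unfolding delete_at_def by auto

lemma nth_delete_at:
  "i < length x \<Longrightarrow> t < length x - 1 \<Longrightarrow> delete_at x i ! t = (if t < i then x ! t else x ! Suc t)"
  unfolding delete_at_def by (auto simp: nth_append min_def)

lemma delete_at_append: "i < length y \<Longrightarrow> delete_at (w @ y) (length w + i) = w @ delete_at y i"
  unfolding delete_at_def by simp

lemma del1_eq_image: "del1 x = delete_at x ` {..<length x}"
  unfolding del1_def delete_at_def by auto

lemma finite_del1: "finite (del1 x)"
  unfolding del1_eq_image by simp

lemma delete_at_eq_delete_at_iff:
  assumes "length x = n" "length y = n" "i < n" "j < n"
  shows "delete_at x i = delete_at y j \<longleftrightarrow>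
    (\<forall>t<n - 1. (if t < i then x ! t else x ! Suc t) = (if t < j then y ! t else y ! Suc t))"
  using assms by (auto simp: list_eq_iff_nth_eq length_delete_at nth_delete_at)

lemma delete_at_eq_shift:
  assumes "length x = n" "length y = n" "i \<le> j" "j < n" "delete_at x i = delete_at y j"
  shows "\<And>t. t < i \<Longrightarrow> x ! t = y ! t"
    and "\<And>t. i \<le> t \<Longrightarrow> t < j \<Longrightarrow> x ! Suc t = y ! t"
    and "\<And>t. j < t \<Longrightarrow> t < n \<Longrightarrow> x ! t = y ! t"
proof -
  have pw: "(if t < i then x ! t else x ! Suc t) = (if t < j then y ! t else y ! Suc t)"
    if "t < n - 1" for t
    using assms delete_at_eq_delete_at_iff[of x n y i j] that by auto
  show "x ! t = y ! t" if "t < i" for t using pw[of t] that assms by auto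
  show "x ! Suc t = y ! t" if "i \<le> t" "t < j" for t using pw[of t] that assms by auto
  show "x ! t = y ! t" if "j < t" "t < n" for t
    using pw[of "t - 1"] that assms by (cases t) auto
qed

lemma delete_at_constant_run:
  assumes "i \<le> p" "p < length x" "\<And>t. i \<le> t \<Longrightarrow> t < p \<Longrightarrow> x ! Suc t = x ! t"
  shows "delete_at x i = delete_at x p"
proof -
  have "(if t < i then x ! t else x ! Suc t) = (if t < p then x ! t else x ! Suc t)" for t
    using assms(1) assms(3)[of t] by auto
  thus ?thesis using assms(1,2) by (simp add: delete_at_eq_delete_at_iff)
qed

section \<open>Confusable pairs\<close>

definition confusable :: "nat list \<Rightarrow> nat list \<Rightarrow> bool" where
  "confusable x y \<longleftrightarrow> 1 < card (del1 x \<inter> del1 y)"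

lemma recon_code_iff:
  "recon_code q n C \<longleftrightarrow> C \<subseteq> words q n \<and> (\<forall>x\<in>C. \<forall>y\<in>C. x \<noteq> y \<longrightarrow> \<not> confusable x y)"
  unfolding recon_code_def confusable_def by (auto simp: not_less)

lemma card_recon_code_le_power: "recon_code q n C \<Longrightarrow> card C \<le> q ^ n"
  using card_mono[OF finite_words, of C q n] by (simp add: recon_code_iff card_words)

lemma confusable_iff:
  "confusable x y \<longleftrightarrow> (\<exists>z1\<in>del1 x \<inter> del1 y. \<exists>z2\<in>del1 x \<inter> del1 y. z1 \<noteq> z2)"
proof -
  have "finite (del1 x \<inter> del1 y)" by (simp add: finite_del1)
  from card_le_Suc0_iff_eq[OF this] show ?thesis
    unfolding confusable_def by (auto simp: Suc_le_eq[symmetric] not_le[symmetric])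
qed

lemma confusable_sym: "confusable x y \<longleftrightarrow> confusable y x"
  unfolding confusable_def by (simp add: Int_commute)

lemma confusable_append_left:
  assumes "confusable y y'"
  shows "confusable (w @ y) (w @ y')"
proof -
  have append: "w @ z \<in> del1 (w @ y)" if z: "z \<in> del1 y" for y z
  proof -
    obtain i where i: "i < length y" "z = delete_at y i" using z by (auto simp: del1_eq_image)
    hence "w @ z = delete_at (w @ y) (length w + i)" by (simp add: delete_at_append)
    moreover have "length w + i < length (w @ y)" using i by simp
    ultimately show ?thesis unfolding del1_eq_image by blast
  qed
  obtain z1 z2 where "z1 \<in> del1 y \<inter> del1 y'" "z2 \<in> del1 y \<inter> del1 y'" "z1 \<noteq> z2"
    using assms unfolding confusable_iff by blast
  thus ?thesis unfolding confusable_iff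
    by (intro bexI[of _ "w @ z1"] bexI[of _ "w @ z2"]) (auto intro: append)
qed

text \<open>On the segment [p, s] the word x reads a b a b ... and y reads b a b a ... for some a \<noteq> b;
  outside of it x and y agree.\<close>
definition alternating_swap :: "nat list \<Rightarrow> nat list \<Rightarrow> nat \<Rightarrow> nat \<Rightarrow> bool" where
  "alternating_swap x y p s \<longleftrightarrow> length y = length x \<and> p < s \<and> s < length x \<and> x ! p \<noteq> y ! p \<and>
     (\<forall>t<length x. t < p \<or> s < t \<longrightarrow> x ! t = y ! t) \<and>
     (\<forall>t. p \<le> t \<longrightarrow> t < s \<longrightarrow> x ! Suc t = y ! t \<and> y ! Suc t = x ! t)"

lemma alternating_swap_nth:
  assumes "alternating_swap x y p s" "p \<le> t" "t \<le> s"
  shows "x ! t = (if even (t - p) then x ! p else y ! p) \<and> y ! t = (if even (t - p) then y ! p else x ! p)"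
  using assms(2,3)
proof (induction t)
  case 0 thus ?case by simp
next
  case (Suc t)
  show ?case
  proof (cases "p \<le> t")
    case True
    hence "x ! Suc t = y ! t \<and> y ! Suc t = x ! t"
      using assms(1) Suc.prems unfolding alternating_swap_def by auto
    thus ?thesis using Suc True by (auto simp: Suc_diff_le)
  next
    case False
    thus ?thesis using Suc.prems by (simp add: le_Suc_eq)
  qed
qed

lemma alternating_swap_confusable:
  assumes "alternating_swap x y p s"
  shows "confusable x y"
proof -
  have len: "length y = length x" "p < length x" "s < length x" and "x ! p \<noteq> y ! p"
    and out: "\<forall>t<length x. t < p \<or> s < t \<longrightarrow> x ! t = y ! t"
    and swap: "\<forall>t. p \<le> t \<longrightarrow> t < s \<longrightarrow> x ! Suc t = y ! t \<and> y ! Suc t = x ! t"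
    using assms unfolding alternating_swap_def by auto
  have "p < s" using assms unfolding alternating_swap_def by simp
  have ps: "delete_at x p = delete_at y s" and sp: "delete_at x s = delete_at y p"
    using len out swap \<open>p < s\<close> by (auto simp: delete_at_eq_delete_at_iff)
  have "x ! Suc p \<noteq> x ! p" using swap \<open>p < s\<close> \<open>x ! p \<noteq> y ! p\<close> by auto
  moreover have "p < length x - 1" using \<open>p < s\<close> len by linarith
  ultimately have "delete_at x p \<noteq> delete_at x s"
    using len \<open>p < s\<close> nth_delete_at[of p x p] nth_delete_at[of s x p] by auto
  moreover have "delete_at x p \<in> del1 x" "delete_at x s \<in> del1 x"
    and "delete_at y s \<in> del1 y" "delete_at y p \<in> del1 y"
    using len by (auto simp: del1_eq_image)
  ultimately show ?thesis unfolding confusable_iff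
    by (intro bexI[of _ "delete_at x p"] bexI[of _ "delete_at x s"]) (auto simp: ps sp)
qed

lemma common_deletion_at_first_difference:
  assumes len: "length x = n" "length y = n" and ij: "i \<le> j" "j < n"
    and eq: "delete_at x i = delete_at y j"
    and ps: "p < n" "s < n" "x ! p \<noteq> y ! p" "x ! s \<noteq> y ! s"
    and before_p: "\<And>t. t < p \<Longrightarrow> x ! t = y ! t"
  shows "delete_at x i = delete_at x p \<and> (\<forall>t. p \<le> t \<longrightarrow> t < s \<longrightarrow> x ! Suc t = y ! t)"
proof -
  note shift = delete_at_eq_shift[OF len ij eq]
  have "i \<le> p" using shift(1) ps by (meson not_le)
  have "p \<le> j" "s \<le> j" using shift(3) ps by (meson not_le)+
  have "delete_at x i = delete_at x p"
    using \<open>i \<le> p\<close> \<open>p \<le> j\<close> ps(1) len shift(2) before_p by (intro delete_at_constant_run) auto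
  moreover have "\<forall>t. p \<le> t \<longrightarrow> t < s \<longrightarrow> x ! Suc t = y ! t"
    using shift(2) \<open>i \<le> p\<close> \<open>s \<le> j\<close> by auto
  ultimately show ?thesis ..
qed

lemma common_deletion_cases:
  assumes len: "length x = n" "length y = n" and ij: "i < n" "j < n"
    and eq: "delete_at x i = delete_at y j"
    and ps: "p < n" "s < n" "x ! p \<noteq> y ! p" "x ! s \<noteq> y ! s"
    and before_p: "\<And>t. t < p \<Longrightarrow> x ! t = y ! t"
  shows "delete_at x i = delete_at x p \<and> (\<forall>t. p \<le> t \<longrightarrow> t < s \<longrightarrow> x ! Suc t = y ! t) \<or>
    delete_at y j = delete_at y p \<and> (\<forall>t. p \<le> t \<longrightarrow> t < s \<longrightarrow> y ! Suc t = x ! t)"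
proof (cases "i \<le> j")
  case True
  thus ?thesis using common_deletion_at_first_difference[OF len True ij(2) eq ps before_p] by blast
next
  case False
  hence "j \<le> i" by simp
  moreover have "y ! p \<noteq> x ! p" "y ! s \<noteq> x ! s" "\<And>t. t < p \<Longrightarrow> y ! t = x ! t"
    using ps before_p by auto
  ultimately show ?thesis
    using common_deletion_at_first_difference[OF len(2,1) _ ij(1) eq[symmetric] ps(1,2)] by blast
qed

lemma confusable_imp_alternating_swap:
  assumes len: "length y = length x" and "x \<noteq> y" and "confusable x y"
  shows "\<exists>p s. alternating_swap x y p s"
proof -
  define n where "n = length x"
  define D where "D = {t. t < n \<and> x ! t \<noteq> y ! t}"
  have "finite D" unfolding D_def by simp
  moreover have "D \<noteq> {}"
    using \<open>x \<noteq> y\<close> len unfolding D_def n_def by (auto simp: list_eq_iff_nth_eq)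
  ultimately have "Min D \<in> D" "Max D \<in> D" and bounds: "\<And>t. t \<in> D \<Longrightarrow> Min D \<le> t \<and> t \<le> Max D"
    by auto
  define p where "p = Min D"
  define s where "s = Max D"
  have ps: "p < n" "s < n" "x ! p \<noteq> y ! p" "x ! s \<noteq> y ! s" "p \<le> s"
    using \<open>Min D \<in> D\<close> \<open>Max D \<in> D\<close> bounds unfolding p_def s_def D_def by auto
  have outside: "x ! t = y ! t" if "t < n" "t < p \<or> s < t" for t
    using that bounds[of t] unfolding p_def s_def D_def by fastforce
  define R where "R \<longleftrightarrow> (\<forall>t. p \<le> t \<longrightarrow> t < s \<longrightarrow> x ! Suc t = y ! t)"
  define L where "L \<longleftrightarrow> (\<forall>t. p \<le> t \<longrightarrow> t < s \<longrightarrow> y ! Suc t = x ! t)"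
  have common: "(z = delete_at x p \<and> R) \<or> (z = delete_at y p \<and> L)" if z: "z \<in> del1 x \<inter> del1 y" for z
  proof -
    obtain i j where "i < n" "j < n" "z = delete_at x i" "z = delete_at y j"
      using z len unfolding del1_eq_image n_def by auto
    thus ?thesis using common_deletion_cases[of x n y i j p s] ps outside len
      unfolding R_def L_def n_def by auto
  qed
  obtain z1 z2 where "z1 \<in> del1 x \<inter> del1 y" "z2 \<in> del1 x \<inter> del1 y" "z1 \<noteq> z2"
    using \<open>confusable x y\<close> unfolding confusable_iff by blast
  with common have "R" "L" and distinct: "delete_at x p \<noteq> delete_at y p" by metis+
  have "p \<noteq> s"
  proof
    assume "p = s"
    hence "delete_at x p = delete_at y p"
      using ps outside len unfolding n_def by (auto simp: delete_at_eq_delete_at_iff)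
    with distinct show False ..
  qed
  hence "alternating_swap x y p s"
    using ps outside \<open>R\<close> \<open>L\<close> len unfolding alternating_swap_def R_def L_def n_def by auto
  thus ?thesis by blast
qed

section \<open>A checksum code\<close>

definition has_2_periodic_window :: "nat \<Rightarrow> nat list \<Rightarrow> bool" where
  "has_2_periodic_window W x \<longleftrightarrow>
     (\<exists>i. i + W \<le> length x \<and> (\<forall>t. i \<le> t \<longrightarrow> t + 2 < i + W \<longrightarrow> x ! (t + 2) = x ! t))"

definition even_sum :: "nat list \<Rightarrow> nat" where
  "even_sum x = (\<Sum>t | t < length x \<and> even t. x ! t)"

definition checksum_code :: "nat \<Rightarrow> nat \<Rightarrow> nat \<Rightarrow> nat \<Rightarrow> nat \<Rightarrow> nat list set" where
  "checksum_code q n W m c = {x \<in> words q n. \<not> has_2_periodic_window W x \<and> even_sum x mod m = c}"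

lemma card_even_interval: "card {t. p \<le> t \<and> t \<le> s \<and> even t} = Suc (s div 2) - Suc p div 2"
proof -
  have "{t. p \<le> t \<and> t \<le> s \<and> even t} = (*) 2 ` {Suc p div 2..s div 2}"
    by (auto simp: image_iff elim!: evenE)
  thus ?thesis by (simp add: card_image inj_on_def)
qed

lemma alternating_swap_periodic_window:
  assumes "alternating_swap x y p s" "W \<le> s - p + 1"
  shows "has_2_periodic_window W x"
  unfolding has_2_periodic_window_def
proof (intro exI[of _ p] conjI allI impI)
  show "p + W \<le> length x" using assms unfolding alternating_swap_def by auto
  fix t assume "p \<le> t" "t + 2 < p + W"
  moreover have "t + 2 - p = Suc (Suc (t - p))" using \<open>p \<le> t\<close> by simp
  ultimately show "x ! (t + 2) = x ! t"
    using alternating_swap_nth[OF assms(1), of t] alternating_swap_nth[OF assms(1), of "t + 2"] assms(2)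
    by auto
qed

lemma even_sum_alternating_swap:
  assumes "alternating_swap x y p s"
  shows "int (even_sum x) - int (even_sum y) =
    int (card {t. p \<le> t \<and> t \<le> s \<and> even t}) *
      (if even p then int (x ! p) - int (y ! p) else int (y ! p) - int (x ! p))"
    (is "_ = _ * ?d")
proof -
  define E where "E = {t. t < length x \<and> even t}"
  have len: "length y = length x" "s < length x" using assms unfolding alternating_swap_def by auto
  have diff: "int (x ! t) - int (y ! t) = (if p \<le> t \<and> t \<le> s then ?d else 0)" if "t \<in> E" for t
  proof (cases "p \<le> t \<and> t \<le> s")
    case True
    moreover have "even (t - p) \<longleftrightarrow> even p" using True that unfolding E_def by (simp add: even_diff_nat)
    ultimately show ?thesis using alternating_swap_nth[OF assms, of t] by auto
  next
    case False
    thus ?thesis using assms that unfolding alternating_swap_def E_def by auto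
  qed
  have "int (even_sum x) - int (even_sum y) = (\<Sum>t\<in>E. int (x ! t) - int (y ! t))"
    unfolding even_sum_def E_def len by (simp add: sum_subtractf)
  also have "\<dots> = (\<Sum>t\<in>E. if p \<le> t \<and> t \<le> s then ?d else 0)"
    by (rule sum.cong) (simp_all add: diff)
  also have "\<dots> = (\<Sum>t\<in>{t \<in> E. p \<le> t \<and> t \<le> s}. ?d)"
    unfolding E_def by (rule sum.inter_filter[symmetric]) simp
  also have "{t \<in> E. p \<le> t \<and> t \<le> s} = {t. p \<le> t \<and> t \<le> s \<and> even t}"
    unfolding E_def using len by auto
  finally show ?thesis by simp
qed

lemma coprime_mult_fact_plus_one:
  fixes e :: nat
  assumes "0 < e" "e \<le> N"
  shows "coprime (k * fact N + 1) e"
proof -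
  have "e dvd k * fact N" using dvd_fact[OF _ assms(2)] assms(1) by simp
  thus ?thesis
    by (metis coprime_add_one_left coprime_commute coprime_mult_right_iff dvd_def)
qed

lemma checksum_code_recon:
  assumes coprime: "\<And>e. 0 < e \<Longrightarrow> e < q \<Longrightarrow> coprime m e" and "W div 2 < m"
  shows "recon_code q n (checksum_code q n W m c)"
  unfolding recon_code_iff
proof (intro conjI ballI impI)
  show "checksum_code q n W m c \<subseteq> words q n" unfolding checksum_code_def by auto
  fix x y assume x: "x \<in> checksum_code q n W m c" and y: "y \<in> checksum_code q n W m c" and "x \<noteq> y"
  have "length y = length x" "set x \<subseteq> {..<q}" "set y \<subseteq> {..<q}"
    using x y unfolding checksum_code_def words_def by auto
  show "\<not> confusable x y"
  proof
    assume "confusable x y"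
    then obtain p s where swap: "alternating_swap x y p s"
      using confusable_imp_alternating_swap \<open>length y = length x\<close> \<open>x \<noteq> y\<close> by blast
    have "p < s" "s < length x" "x ! p \<noteq> y ! p" using swap unfolding alternating_swap_def by auto
    hence "x ! p \<in> set x" "y ! p \<in> set y" using \<open>length y = length x\<close> by simp_all
    hence "x ! p < q" "y ! p < q" using \<open>set x \<subseteq> {..<q}\<close> \<open>set y \<subseteq> {..<q}\<close> by auto
    define N where "N = card {t. p \<le> t \<and> t \<le> s \<and> even t}"
    define d where "d = (if even p then int (x ! p) - int (y ! p) else int (y ! p) - int (x ! p))"
    define e where "e = nat \<bar>d\<bar>"
    have "\<not> has_2_periodic_window W x" using x unfolding checksum_code_def by simp
    hence "s - p + 1 < W" using alternating_swap_periodic_window[OF swap] not_less by blast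
    hence "0 < N" "N < m"
      using \<open>p < s\<close> \<open>W div 2 < m\<close> unfolding N_def card_even_interval by linarith+
    have "0 < e" "e < q"
      using \<open>x ! p \<noteq> y ! p\<close> \<open>x ! p < q\<close> \<open>y ! p < q\<close> unfolding e_def d_def by auto
    have "even_sum x mod m = even_sum y mod m" using x y unfolding checksum_code_def by simp
    hence "int m dvd int (even_sum x) - int (even_sum y)"
      by (metis mod_eq_dvd_iff of_nat_mod)
    hence "int m dvd int N * d" unfolding even_sum_alternating_swap[OF swap] N_def d_def .
    moreover have "int N * int e = \<bar>int N * d\<bar>" unfolding e_def by (simp add: abs_mult)
    ultimately have "int m dvd int N * int e" by simp
    hence "m dvd N * e" by (metis of_nat_dvd_iff of_nat_mult)
    with coprime[OF \<open>0 < e\<close> \<open>e < q\<close>] have "m dvd N" by (simp add: coprime_dvd_mult_left_iff)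
    with \<open>0 < N\<close> \<open>N < m\<close> show False by (simp add: nat_dvd_not_less)
  qed
qed

lemma periodic_window_eqI:
  assumes len: "length y = length x" and "i + W \<le> length x"
    and px: "\<And>t. i \<le> t \<Longrightarrow> t + 2 < i + W \<Longrightarrow> x ! (t + 2) = x ! t"
    and py: "\<And>t. i \<le> t \<Longrightarrow> t + 2 < i + W \<Longrightarrow> y ! (t + 2) = y ! t"
    and take: "take (i + 2) x = take (i + 2) y" and drop: "drop (i + W) x = drop (i + W) y"
  shows "x = y"
proof -
  have "x ! t = y ! t" if "t < length x" for t
    using that
  proof (induction t rule: less_induct)
    case (less t)
    consider "t < i + 2" | "i + W \<le> t" | "i + 2 \<le> t" "t < i + W" by linarith
    thus ?case
    proof cases
      case 1
      thus ?thesis using arg_cong[OF take, of "\<lambda>z. z ! t"] less.prems len by simp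
    next
      case 2
      thus ?thesis using arg_cong[OF drop, of "\<lambda>z. z ! (t - (i + W))"] less.prems len by simp
    next
      case 3
      define u where "u = t - 2"
      have "t = u + 2" "i \<le> u" "u + 2 < i + W" using 3 unfolding u_def by linarith+
      thus ?thesis using px py less by simp
    qed
  qed
  with len show ?thesis by (simp add: list_eq_iff_nth_eq)
qed

lemma card_periodic_window:
  assumes "2 \<le> W" "i + W \<le> n"
  shows "card {x \<in> words q n. \<forall>t. i \<le> t \<longrightarrow> t + 2 < i + W \<longrightarrow> x ! (t + 2) = x ! t} \<le> q ^ (n + 2 - W)"
    (is "card ?S \<le> _")
proof -
  let ?g = "\<lambda>x. (take (i + 2) x, drop (i + W) x)"
  have "inj_on ?g ?S"
  proof (rule inj_onI)
    fix x y assume "x \<in> ?S" "y \<in> ?S" "?g x = ?g y"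
    thus "x = y" using assms by (intro periodic_window_eqI[of y x i W]) (auto simp: words_def)
  qed
  moreover have "?g ` ?S \<subseteq> words q (i + 2) \<times> words q (n - (i + W))"
    using assms by (auto simp: words_def dest: in_set_takeD in_set_dropD)
  hence "card (?g ` ?S) \<le> card (words q (i + 2) \<times> words q (n - (i + W)))"
    by (intro card_mono) (simp_all add: finite_words)
  ultimately have "card ?S \<le> card (words q (i + 2) \<times> words q (n - (i + W)))"
    by (simp add: card_image)
  also have "\<dots> = q ^ ((i + 2) + (n - (i + W)))"
    by (simp add: card_cartesian_product card_words power_add)
  also have "(i + 2) + (n - (i + W)) = n + 2 - W" using assms by linarith
  finally show ?thesis .
qed

lemma card_has_2_periodic_window:
  assumes "2 \<le> W" "W \<le> n"
  shows "card {x \<in> words q n. has_2_periodic_window W x} \<le> (n + 1) * q ^ (n + 2 - W)"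
proof -
  let ?S = "\<lambda>i. {x \<in> words q n. \<forall>t. i \<le> t \<longrightarrow> t + 2 < i + W \<longrightarrow> x ! (t + 2) = x ! t}"
  have "{x \<in> words q n. has_2_periodic_window W x} \<subseteq> (\<Union>i\<le>n - W. ?S i)"
  proof
    fix x assume "x \<in> {x \<in> words q n. has_2_periodic_window W x}"
    then obtain i where "x \<in> words q n" "i + W \<le> n"
      "\<forall>t. i \<le> t \<longrightarrow> t + 2 < i + W \<longrightarrow> x ! (t + 2) = x ! t"
      unfolding has_2_periodic_window_def words_def by auto
    thus "x \<in> (\<Union>i\<le>n - W. ?S i)" by (intro UN_I[of i]) auto
  qed
  hence "card {x \<in> words q n. has_2_periodic_window W x} \<le> card (\<Union>i\<le>n - W. ?S i)"
    by (intro card_mono) (auto simp: finite_words)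
  also have "\<dots> \<le> (\<Sum>i\<le>n - W. card (?S i))" by (rule card_UN_le) simp
  also have "\<dots> \<le> (\<Sum>i\<le>n - W. q ^ (n + 2 - W))"
    using assms by (intro sum_mono card_periodic_window) auto
  also have "\<dots> \<le> (n + 1) * q ^ (n + 2 - W)" by simp
  finally show ?thesis .
qed

lemma pigeonhole_mod:
  assumes "finite A" "0 < m"
  shows "\<exists>c. card A \<le> m * card {x \<in> A. f x mod m = c}"
proof -
  define F where "F c = card {x \<in> A. f x mod m = c}" for c
  obtain c where "c < m" and max: "\<And>c'. c' < m \<Longrightarrow> F c' \<le> F c"
    using Max_in[of "F ` {..<m}"] Max_ge[of "F ` {..<m}"] assms(2) by fastforce
  have "A = (\<Union>c'<m. {x \<in> A. f x mod m = c'})" using assms(2) by auto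
  hence "card A \<le> (\<Sum>c'<m. F c')" unfolding F_def by (metis card_UN_le finite_lessThan)
  also have "\<dots> \<le> (\<Sum>c'<m. F c)" by (intro sum_mono max) simp
  finally show ?thesis unfolding F_def by auto
qed

lemma exists_large_checksum_code:
  assumes "0 < q" "2 \<le> W" "W \<le> n" "0 < m"
  shows "\<exists>c. real q ^ n * (1 - real (n + 1) / real q ^ (W - 2)) \<le> real m * real (card (checksum_code q n W m c))"
proof -
  define good where "good = {x \<in> words q n. \<not> has_2_periodic_window W x}"
  have "good = words q n - {x \<in> words q n. has_2_periodic_window W x}" unfolding good_def by auto
  hence "card good = q ^ n - card {x \<in> words q n. has_2_periodic_window W x}"
    by (simp add: card_Diff_subset finite_words card_words)
  moreover have "card {x \<in> words q n. has_2_periodic_window W x} \<le> card (words q n)"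
    by (rule card_mono) (auto simp: finite_words)
  ultimately have "real (card good) = real q ^ n - real (card {x \<in> words q n. has_2_periodic_window W x})"
    by (simp add: of_nat_diff card_words)
  moreover have "real (card {x \<in> words q n. has_2_periodic_window W x}) \<le> real ((n + 1) * q ^ (n + 2 - W))"
    using card_has_2_periodic_window[OF assms(2,3), of q] by (simp only: of_nat_le_iff)
  hence "real (card {x \<in> words q n. has_2_periodic_window W x}) \<le> real (n + 1) * real q ^ (n + 2 - W)"
    by (simp only: of_nat_mult of_nat_power)
  ultimately have "real q ^ n - real (n + 1) * real q ^ (n + 2 - W) \<le> real (card good)"
    by linarith
  moreover have "real q ^ (n + 2 - W) * real q ^ (W - 2) = real q ^ n"
    using assms by (simp flip: power_add)
  hence "real q ^ n * (1 - real (n + 1) / real q ^ (W - 2)) = real q ^ n - real (n + 1) * real q ^ (n + 2 - W)"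
    using assms by (simp add: field_simps)
  ultimately have good_large: "real q ^ n * (1 - real (n + 1) / real q ^ (W - 2)) \<le> real (card good)"
    by linarith
  moreover obtain c where "card good \<le> m * card {x \<in> good. even_sum x mod m = c}"
    using pigeonhole_mod[of good m even_sum] assms(4) unfolding good_def by (auto simp: finite_words)
  moreover have "{x \<in> good. even_sum x mod m = c} = checksum_code q n W m c"
    unfolding good_def checksum_code_def by auto
  ultimately have "real (card good) \<le> real (m * card (checksum_code q n W m c))"
    by (simp only: of_nat_le_iff)
  thus ?thesis using good_large by (intro exI[of _ c]) simp
qed

section \<open>Phase-shifted alternating prefixes\<close>

definition phase_shifted :: "nat \<Rightarrow> nat \<Rightarrow> nat \<Rightarrow> nat \<Rightarrow> nat list" where
  "phase_shifted L m a b =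
     map (\<lambda>t. if t < m then (if even t then a else b) else (if even t then b else a)) [0..<L]"

lemma length_phase_shifted [simp]: "length (phase_shifted L m a b) = L"
  unfolding phase_shifted_def by simp

lemma nth_phase_shifted:
  "t < L \<Longrightarrow> phase_shifted L m a b ! t = (if t < m then (if even t then a else b) else (if even t then b else a))"
  unfolding phase_shifted_def by simp

lemma phase_shifted_words: "a < q \<Longrightarrow> b < q \<Longrightarrow> phase_shifted L m a b \<in> words q L"
  unfolding words_def phase_shifted_def by auto

lemma phase_shifted_inject:
  assumes "2 \<le> L" "a \<noteq> b" "a' \<noteq> b'" "even m" "m < L" "even m'" "m' < L"
    and eq: "phase_shifted L m a b = phase_shifted L m' a' b'"
  shows "m = m' \<and> a = a' \<and> b = b'"
proof -
  have at: "phase_shifted L m a b ! t = phase_shifted L m' a' b' ! t" for t using eq by simp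
  have "m = m'"
  proof (rule ccontr)
    assume "m \<noteq> m'"
    have "m = 0 \<or> 2 \<le> m" "m' = 0 \<or> 2 \<le> m'" using assms by presburger+
    with \<open>m \<noteq> m'\<close> show False
      using at[of 0] at[of 1] at[of m] at[of m'] assms(1-7) by (auto simp: nth_phase_shifted split: if_splits)
  qed
  moreover have "a = a' \<and> b = b'"
    using at[of 0] at[of 1] \<open>m = m'\<close> assms(1-7) by (auto simp: nth_phase_shifted split: if_splits)
  ultimately show ?thesis by blast
qed

lemma phase_shifted_confusable:
  assumes "a \<noteq> b" "even m" "even m'" "m \<noteq> m'" "m \<le> L" "m' \<le> L"
  shows "confusable (phase_shifted L m a b @ y) (phase_shifted L m' a b @ y)"
proof -
  have "confusable (phase_shifted L m a b @ y) (phase_shifted L m' a b @ y)"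
    if "a \<noteq> b" "even m" "even m'" "m < m'" "m' \<le> L" for m m'
  proof (rule alternating_swap_confusable)
    have "Suc m < m'" using that by presburger
    thus "alternating_swap (phase_shifted L m a b @ y) (phase_shifted L m' a b @ y) m (m' - 1)"
      using that unfolding alternating_swap_def by (auto simp: nth_append nth_phase_shifted)
  qed
  thus ?thesis using assms confusable_sym by (metis linorder_neqE_nat)
qed

definition phase_shifted_prefixes :: "nat \<Rightarrow> nat \<Rightarrow> nat list set" where
  "phase_shifted_prefixes q L = (\<lambda>(m, a, b). phase_shifted L m a b) `
     ({m. even m \<and> m < L} \<times> {(a, b). a < q \<and> b < q \<and> a \<noteq> b})"

lemma card_even_below: "card {m::nat. even m \<and> m < L} = (L + 1) div 2"
proof -
  have "{m::nat. even m \<and> m < L} = (*) 2 ` {..<(L + 1) div 2}"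
    by (auto simp: image_iff elim!: evenE)
  thus ?thesis by (simp add: card_image inj_on_def)
qed

lemma card_distinct_pairs: "card {(a, b). a < q \<and> b < q \<and> a \<noteq> (b::nat)} = q * (q - 1)"
proof -
  have "{(a, b). a < q \<and> b < q \<and> a \<noteq> (b::nat)} = Sigma {..<q} (\<lambda>a. {..<q} - {a})" by auto
  moreover have "card (Sigma {..<q} (\<lambda>a. {..<q} - {a})) = (\<Sum>a<q. q - 1)"
    by (simp add: card_SigmaI)
  ultimately show ?thesis by simp
qed

lemma phase_shifted_prefixes_subset: "phase_shifted_prefixes q L \<subseteq> words q L"
  unfolding phase_shifted_prefixes_def using phase_shifted_words by auto

lemma inj_on_phase_shifted:
  assumes "2 \<le> L"
  shows "inj_on (\<lambda>(m, a, b). phase_shifted L m a b)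
    ({m. even m \<and> m < L} \<times> {(a, b). a < q \<and> b < q \<and> a \<noteq> b})"
proof (rule inj_onI)
  fix u v assume "u \<in> {m. even m \<and> m < L} \<times> {(a, b). a < q \<and> b < q \<and> a \<noteq> b}"
    and "v \<in> {m. even m \<and> m < L} \<times> {(a, b). a < q \<and> b < q \<and> a \<noteq> b}"
    and "(\<lambda>(m, a, b). phase_shifted L m a b) u = (\<lambda>(m, a, b). phase_shifted L m a b) v"
  moreover obtain m a b m' a' b' where "u = (m, a, b)" "v = (m', a', b')" by (metis prod_cases3)
  ultimately show "u = v" using phase_shifted_inject[OF assms, of a b a' b' m m'] by simp
qed

lemma card_phase_shifted_prefixes:
  assumes "2 \<le> L"
  shows "card (phase_shifted_prefixes q L) = q * (q - 1) * ((L + 1) div 2)"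
  using inj_on_phase_shifted[OF assms, of q] unfolding phase_shifted_prefixes_def
  by (simp add: card_image card_cartesian_product card_even_below card_distinct_pairs)

lemma card_phase_shifted_prefixes_le:
  assumes "2 \<le> L"
  shows "q * (q - 1) * ((L + 1) div 2) \<le> q ^ L"
  using card_mono[OF finite_words phase_shifted_prefixes_subset, of q L]
  by (simp add: card_words card_phase_shifted_prefixes[OF assms])

lemma card_words_diff_phase_shifted_prefixes:
  assumes "2 \<le> L"
  shows "real (card (words q L - phase_shifted_prefixes q L)) = real q ^ L - real (q * (q - 1) * ((L + 1) div 2))"
  using card_phase_shifted_prefixes_le[OF assms, of q]
  by (simp add: card_Diff_subset finite_subset[OF phase_shifted_prefixes_subset finite_words]
      phase_shifted_prefixes_subset card_words card_phase_shifted_prefixes[OF assms] of_nat_diff)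

lemma recon_code_fiber:
  assumes "recon_code q n C" "length w = L"
  shows "recon_code q (n - L) {y. w @ y \<in> C}"
  unfolding recon_code_iff
proof (intro conjI ballI impI)
  show "{y. w @ y \<in> C} \<subseteq> words q (n - L)"
  proof
    fix y assume "y \<in> {y. w @ y \<in> C}"
    hence "w @ y \<in> words q n" using assms(1) unfolding recon_code_iff by blast
    thus "y \<in> words q (n - L)" using assms(2) by (auto simp: words_def)
  qed
  fix y y' assume "y \<in> {y. w @ y \<in> C}" "y' \<in> {y. w @ y \<in> C}" "y \<noteq> y'"
  hence "\<not> confusable (w @ y) (w @ y')" using assms(1) unfolding recon_code_iff by simp
  thus "\<not> confusable y y'" using confusable_append_left by blast
qed

lemma sum_card_phase_shifted_fibers:
  assumes C: "recon_code q n C" and "a \<noteq> b"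
  shows "(\<Sum>m | even m \<and> m < L. card {y. phase_shifted L m a b @ y \<in> C}) \<le> q ^ (n - L)"
proof -
  let ?F = "\<lambda>m. {y. phase_shifted L m a b @ y \<in> C}"
  have fibers: "?F m \<subseteq> words q (n - L)" for m
    using recon_code_fiber[OF C, of "phase_shifted L m a b" L] unfolding recon_code_iff by simp
  have "?F m \<inter> ?F m' = {}" if m: "even m" "m < L" and m': "even m'" "m' < L" and "m \<noteq> m'" for m m'
  proof -
    have "2 \<le> L" using m m' \<open>m \<noteq> m'\<close> by presburger
    have "y \<notin> ?F m'" if "y \<in> ?F m" for y
    proof
      assume "y \<in> ?F m'"
      moreover have "confusable (phase_shifted L m a b @ y) (phase_shifted L m' a b @ y)"
        using phase_shifted_confusable \<open>a \<noteq> b\<close> m m' \<open>m \<noteq> m'\<close> by simp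
      ultimately have "phase_shifted L m a b @ y = phase_shifted L m' a b @ y"
        using C \<open>y \<in> ?F m\<close> unfolding recon_code_iff by blast
      hence "m = m'" using phase_shifted_inject[OF \<open>2 \<le> L\<close> \<open>a \<noteq> b\<close> \<open>a \<noteq> b\<close> m m'] by simp
      with \<open>m \<noteq> m'\<close> show False ..
    qed
    thus ?thesis by blast
  qed
  hence "(\<Sum>m | even m \<and> m < L. card (?F m)) = card (\<Union>m\<in>{m. even m \<and> m < L}. ?F m)"
    using finite_subset[OF fibers finite_words] by (intro card_UN_disjoint[symmetric]) auto
  also have "\<dots> \<le> card (words q (n - L))"
    using fibers by (intro card_mono finite_words) auto
  finally show ?thesis by (simp add: card_words)
qed

lemma sum_card_fibers_phase_shifted_prefixes:
  assumes C: "recon_code q n C" and "2 \<le> L"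
  shows "(\<Sum>w\<in>phase_shifted_prefixes q L. card {y. w @ y \<in> C}) \<le> q * (q - 1) * q ^ (n - L)"
proof -
  let ?F = "\<lambda>w. card {y. w @ y \<in> C}"
  let ?P = "{(a, b). a < q \<and> b < q \<and> a \<noteq> b}"
  have "(\<Sum>w\<in>phase_shifted_prefixes q L. ?F w) =
      (\<Sum>(m, a, b)\<in>{m. even m \<and> m < L} \<times> ?P. ?F (phase_shifted L m a b))"
    unfolding phase_shifted_prefixes_def
    by (subst sum.reindex[OF inj_on_phase_shifted[OF assms(2)]]) (simp add: case_prod_beta')
  also have "\<dots> = (\<Sum>(a, b)\<in>?P. \<Sum>m | even m \<and> m < L. ?F (phase_shifted L m a b))"
    by (subst sum.cartesian_product[symmetric], subst sum.swap) (simp add: case_prod_beta')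
  also have "\<dots> \<le> (\<Sum>(a, b)\<in>?P. q ^ (n - L))"
    using sum_card_phase_shifted_fibers[OF C] by (intro sum_mono) auto
  also have "\<dots> = q * (q - 1) * q ^ (n - L)" by (simp add: card_distinct_pairs)
  finally show ?thesis .
qed

lemma card_eq_sum_card_fibers:
  assumes "C \<subseteq> words q n" "L \<le> n"
  shows "card C = (\<Sum>w\<in>words q L. card {y. w @ y \<in> C})"
proof -
  have fin: "finite C" using assms(1) finite_words finite_subset by blast
  have "C = (\<Union>w\<in>words q L. (@) w ` {y. w @ y \<in> C})"
  proof (intro equalityI subsetI)
    fix x assume "x \<in> C"
    moreover have "take L x \<in> words q L"
      using \<open>x \<in> C\<close> assms by (auto simp: words_def dest: in_set_takeD)
    ultimately show "x \<in> (\<Union>w\<in>words q L. (@) w ` {y. w @ y \<in> C})"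
      by (intro UN_I[of "take L x"] image_eqI[of _ _ "drop L x"]) auto
  qed auto
  also have "card \<dots> = (\<Sum>w\<in>words q L. card ((@) w ` {y. w @ y \<in> C}))"
    using fin by (intro card_UN_disjoint finite_words)
      (auto simp: words_def intro: finite_subset[OF _ fin])
  finally show ?thesis by (simp add: card_image inj_on_def)
qed

lemma card_recon_code_le:
  assumes "0 < q" "2 \<le> L" "B * L \<le> n" "recon_code q n C"
    and h: "h = (L + 1) div 2" and \<rho>: "\<rho> = real (q * (q - 1) * h) / real q ^ L"
  shows "real (card C) \<le> real q ^ n * (1 / real h + (1 - \<rho>) ^ B)"
  using assms(3,4)
proof (induction B arbitrary: n C)
  case 0
  have "card C \<le> q ^ n" using card_recon_code_le_power "0.prems"(2) .
  hence "real (card C) \<le> real q ^ n" by (simp flip: of_nat_power)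
  moreover have "real q ^ n \<le> real q ^ n * (1 / real h + (1 - \<rho>) ^ 0)" by (simp add: distrib_left)
  ultimately show ?case by linarith
next
  case (Suc B)
  define n' where "n' = n - L"
  have "n = L + n'" "B * L \<le> n'" using Suc.prems(1) unfolding n'_def by auto
  define T where "T = phase_shifted_prefixes q L"
  define F where "F w = card {y. w @ y \<in> C}" for w
  define \<Phi> where "\<Phi> = 1 / real h + (1 - \<rho>) ^ B"
  have "0 < h" "0 < real q ^ L" using assms(1,2) h by auto
  have T_sub: "T \<subseteq> words q L" unfolding T_def by (rule phase_shifted_prefixes_subset)
  have "card C = (\<Sum>w\<in>words q L - T. F w) + (\<Sum>w\<in>T. F w)"
    using card_eq_sum_card_fibers[of C q n L] Suc.prems(2) \<open>n = L + n'\<close> T_sub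
    unfolding F_def recon_code_iff by (simp add: sum.subset_diff[OF T_sub finite_words])
  moreover have fiber_bound: "real (F w) \<le> real q ^ n' * \<Phi>" if "w \<in> words q L" for w
  proof -
    have "recon_code q n' {y. w @ y \<in> C}"
      using recon_code_fiber[OF Suc.prems(2), of w L] that unfolding n'_def words_def by simp
    from Suc.IH[OF \<open>B * L \<le> n'\<close> this] show ?thesis unfolding F_def \<Phi>_def .
  qed
  have "real (\<Sum>w\<in>words q L - T. F w) \<le> (\<Sum>w\<in>words q L - T. real q ^ n' * \<Phi>)"
    unfolding of_nat_sum by (rule sum_mono) (simp add: fiber_bound)
  hence "real (\<Sum>w\<in>words q L - T. F w) \<le> real (card (words q L - T)) * (real q ^ n' * \<Phi>)"
    by simp
  moreover have "real (card (words q L - T)) = real q ^ L * (1 - \<rho>)"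
  proof -
    have "real q ^ L * \<rho> = real (q * (q - 1) * h)" unfolding \<rho> using \<open>0 < real q ^ L\<close> by simp
    with card_words_diff_phase_shifted_prefixes[OF assms(2), of q, folded h] show ?thesis
      unfolding T_def by (simp add: right_diff_distrib)
  qed
  moreover have "real (\<Sum>w\<in>T. F w) \<le> real q ^ L * (\<rho> / real h) * real q ^ n'"
  proof -
    have "real (\<Sum>w\<in>T. F w) \<le> real (q * (q - 1) * q ^ n')"
      using sum_card_fibers_phase_shifted_prefixes[OF Suc.prems(2) assms(2)]
      unfolding T_def F_def n'_def by (simp only: of_nat_le_iff)
    also have "\<dots> = real q ^ L * (\<rho> / real h) * real q ^ n'"
      using \<open>0 < h\<close> \<open>0 < real q ^ L\<close> unfolding \<rho> by simp
    finally show ?thesis .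
  qed
  ultimately have "real (card C) \<le> real q ^ L * real q ^ n' * ((1 - \<rho>) * \<Phi> + \<rho> / real h)"
    by (simp add: algebra_simps)
  also have "(1 - \<rho>) * \<Phi> + \<rho> / real h = 1 / real h + (1 - \<rho>) ^ Suc B"
    unfolding \<Phi>_def by (simp add: field_simps flip: add_divide_distrib)
  finally show ?case using \<open>n = L + n'\<close> by (simp add: power_add)
qed

section \<open>Bounds on the minimum redundancy\<close>

lemma min_redundancy_le:
  assumes "1 < q" "recon_code q n C" "C \<noteq> {}"
  shows "min_redundancy q n \<le> redundancy q n C"
  unfolding min_redundancy_def
proof (rule cInf_lower)
  show "redundancy q n C \<in> {redundancy q n C | C. recon_code q n C \<and> C \<noteq> {}}" using assms by blast
  have "0 \<le> redundancy q n C'" if "recon_code q n C'" "C' \<noteq> {}" for C'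
  proof -
    have "0 < card C'" using that finite_words by (auto simp: recon_code_iff card_gt_0_iff intro: finite_subset)
    moreover have "real (card C') \<le> real q ^ n"
      using card_recon_code_le_power[OF that(1)] by (simp flip: of_nat_power)
    ultimately have "log q (card C') \<le> log q (real q ^ n)" using assms(1) by (intro log_mono) auto
    thus ?thesis using assms(1) by (simp add: redundancy_def log_pow_cancel)
  qed
  thus "bdd_below {redundancy q n C | C. recon_code q n C \<and> C \<noteq> {}}"
    by (intro bdd_belowI[of _ 0]) blast
qed

lemma min_redundancy_ge:
  assumes "1 < q" and bound: "\<And>C. recon_code q n C \<Longrightarrow> real (card C) \<le> K"
  shows "real n - log q K \<le> min_redundancy q n"
  unfolding min_redundancy_def
proof (rule cInf_greatest)
  have "recon_code q n {replicate n 0}"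
    using assms(1) by (simp add: recon_code_def words_def set_replicate_conv_if)
  thus "{redundancy q n C | C. recon_code q n C \<and> C \<noteq> {}} \<noteq> {}" by blast
  fix r assume "r \<in> {redundancy q n C | C. recon_code q n C \<and> C \<noteq> {}}"
  then obtain C where C: "recon_code q n C" "C \<noteq> {}" and r: "r = redundancy q n C" by blast
  have "0 < card C" using C finite_words by (auto simp: recon_code_iff card_gt_0_iff intro: finite_subset)
  hence "log q (card C) \<le> log q K" using bound[OF C(1)] assms(1) by (intro log_mono) auto
  thus "real n - log q K \<le> r" unfolding r redundancy_def by simp
qed

lemma exists_coprime_modulus:
  "\<exists>m. W div 2 < m \<and> real m \<le> real W / 2 + fact (q - 1) + 1 \<and> (\<forall>e. 0 < e \<longrightarrow> e < q \<longrightarrow> coprime m e)"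
proof (intro exI conjI allI impI)
  define F :: nat where "F = fact (q - 1)"
  define m where "m = (W div 2 div F + 1) * F + 1"
  have "0 < F" by (simp add: F_def)
  have "W div 2 div F * F \<le> W div 2" "W div 2 < F + W div 2 div F * F"
    using dividend_less_div_times[OF \<open>0 < F\<close>] by simp_all
  hence "W div 2 < m" and "m \<le> W div 2 + F + 1" unfolding m_def by simp_all
  hence "real m \<le> real (W div 2 + F + 1)" by (simp only: of_nat_le_iff)
  moreover have "real (W div 2) \<le> real W / 2" by linarith
  ultimately show "W div 2 < m" "real m \<le> real W / 2 + fact (q - 1) + 1"
    using \<open>W div 2 < m\<close> unfolding F_def by simp_all
  show "coprime m e" if "0 < e" "e < q" for e
    using coprime_mult_fact_plus_one[of e "q - 1" "W div 2 div F + 1"] that unfolding m_def F_def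
    by (simp del: fact_Suc)
qed

lemma min_redundancy_le_checksum:
  assumes "2 \<le> q" "2 \<le> W" "W \<le> n" and small: "real (n + 1) / real q ^ (W - 2) < 1"
  shows "min_redundancy q n \<le>
    log q (real W / 2 + fact (q - 1) + 1) - log q (1 - real (n + 1) / real q ^ (W - 2))"
proof -
  define \<delta> where "\<delta> = real (n + 1) / real q ^ (W - 2)"
  obtain m where m: "W div 2 < m" "real m \<le> real W / 2 + fact (q - 1) + 1"
    "\<And>e. 0 < e \<Longrightarrow> e < q \<Longrightarrow> coprime m e"
    using exists_coprime_modulus by blast
  obtain c where c: "real q ^ n * (1 - \<delta>) \<le> real m * real (card (checksum_code q n W m c))"
    using exists_large_checksum_code[of q W n m] assms m(1) unfolding \<delta>_def by auto
  define C where "C = checksum_code q n W m c"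
  have code: "recon_code q n C" unfolding C_def using m by (intro checksum_code_recon) auto
  have "0 < m" "0 < 1 - \<delta>" "0 < real q ^ n" using m(1) small assms(1) unfolding \<delta>_def by auto
  hence lower: "real q ^ n * (1 - \<delta>) / real m \<le> real (card C)"
    using c unfolding C_def by (simp add: field_simps)
  moreover have pos: "0 < real q ^ n * (1 - \<delta>) / real m"
    using \<open>0 < m\<close> \<open>0 < 1 - \<delta>\<close> \<open>0 < real q ^ n\<close> by simp
  ultimately have "C \<noteq> {}" by auto
  have "min_redundancy q n \<le> real n - log q (card C)"
    using min_redundancy_le[OF _ code \<open>C \<noteq> {}\<close>] assms(1) by (simp add: redundancy_def)
  also have "\<dots> \<le> real n - log q (real q ^ n * (1 - \<delta>) / real m)"
    using lower pos assms(1) by (simp add: log_le_cancel_iff)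
  also have "\<dots> = log q (real m) - log q (1 - \<delta>)"
    using \<open>0 < m\<close> \<open>0 < 1 - \<delta>\<close> assms(1) by (simp add: log_divide_pos log_mult_pos log_pow_cancel)
  also have "\<dots> \<le> log q (real W / 2 + fact (q - 1) + 1) - log q (1 - \<delta>)"
    using m(2) \<open>0 < m\<close> assms(1) by (simp add: log_le_cancel_iff)
  finally show ?thesis unfolding \<delta>_def .
qed

lemma min_redundancy_le_log_bound:
  fixes u :: real
  assumes q: "2 \<le> q" and u: "u = log q (real n)" "4 \<le> u" "u + sqrt u + 1 \<le> real n"
    and small: "2 * real q ^ 2 / real q powr sqrt u < 1"
  shows "min_redundancy q n \<le>
    log q (((u + sqrt u + 1) / 2 + fact (q - 1) + 1) / (1 - 2 * real q ^ 2 / real q powr sqrt u))"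
proof -
  define W where "W = nat \<lceil>u + sqrt u\<rceil>"
  have "0 \<le> sqrt u" "1 < real q" using u(2) q by auto
  hence "0 < real n" using u(2,3) by linarith
  have W: "u + sqrt u \<le> real W" "real W \<le> u + sqrt u + 1" unfolding W_def using \<open>0 \<le> sqrt u\<close> u by linarith+
  hence "2 \<le> W" "W \<le> n" using u \<open>0 \<le> sqrt u\<close> by linarith+
  have "real n * real q powr sqrt u = real q powr (u + sqrt u)"
    using \<open>0 < real n\<close> \<open>1 < real q\<close> u(1) by (simp add: powr_add)
  also have "\<dots> \<le> real q ^ W" using W(1) \<open>1 < real q\<close> by (simp add: powr_realpow[symmetric])
  finally have qW: "real n * real q powr sqrt u \<le> real q ^ W" .
  have "real q ^ W = real q ^ (W - 2) * real q ^ 2"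
    by (simp only: power_add[symmetric] le_add_diff_inverse2[OF \<open>2 \<le> W\<close>])
  hence "real (n + 1) / real q ^ (W - 2) = real (n + 1) * real q ^ 2 / real q ^ W"
    using \<open>1 < real q\<close> by (simp add: field_simps)
  also have "\<dots> \<le> 2 * real n * real q ^ 2 / (real n * real q powr sqrt u)"
    using qW \<open>0 < real n\<close> \<open>1 < real q\<close>
    by (intro frac_le mult_right_mono) (auto intro!: mult_pos_pos)
  also have "\<dots> = 2 * real q ^ 2 / real q powr sqrt u" using \<open>0 < real n\<close> by simp
  finally have \<delta>: "real (n + 1) / real q ^ (W - 2) \<le> 2 * real q ^ 2 / real q powr sqrt u" .
  have "min_redundancy q n \<le>
      log q (real W / 2 + fact (q - 1) + 1) - log q (1 - real (n + 1) / real q ^ (W - 2))"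
    using \<delta> small by (intro min_redundancy_le_checksum q \<open>2 \<le> W\<close> \<open>W \<le> n\<close>) simp
  also have "\<dots> \<le> log q ((u + sqrt u + 1) / 2 + fact (q - 1) + 1) - log q (1 - 2 * real q ^ 2 / real q powr sqrt u)"
  proof (rule diff_mono)
    have "0 < real W / 2 + fact (q - 1) + 1" by (intro add_nonneg_pos) simp_all
    thus "log q (real W / 2 + fact (q - 1) + 1) \<le> log q ((u + sqrt u + 1) / 2 + fact (q - 1) + 1)"
      using W(2) \<open>1 < real q\<close> by (intro log_mono) auto
    show "log q (1 - 2 * real q ^ 2 / real q powr sqrt u) \<le> log q (1 - real (n + 1) / real q ^ (W - 2))"
      using \<delta> small \<open>1 < real q\<close> by (intro log_mono) auto
  qed
  also have "\<dots> = log q (((u + sqrt u + 1) / 2 + fact (q - 1) + 1) / (1 - 2 * real q ^ 2 / real q powr sqrt u))"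
    using small \<open>0 \<le> sqrt u\<close> u(2) by (simp add: log_divide_pos add_pos_nonneg)
  finally show ?thesis .
qed

lemma phase_shift_density_mult_blocks_ge:
  fixes u :: real
  assumes q: "2 \<le> q" and u: "u = log q (real n)" "0 \<le> u" "u + sqrt u + 1 \<le> real n / 2"
    and L: "2 \<le> L" "real L \<le> u - sqrt u"
  shows "2 powr sqrt u / 2 \<le> real (q * (q - 1) * ((L + 1) div 2)) / real q ^ L * real (n div L)"
proof -
  define B where "B = n div L"
  define K where "K = q * (q - 1) * ((L + 1) div 2)"
  have "1 < real q" "0 \<le> sqrt u" using q u(2) by auto
  hence "0 < real n" using u by linarith
  have "0 < real q ^ L" using \<open>1 < real q\<close> by simp
  have "2 * 1 \<le> q * (q - 1)" using q by (intro mult_le_mono) auto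
  hence "2 * ((L + 1) div 2) \<le> K" unfolding K_def by (intro mult_right_mono) auto
  hence "real (2 * ((L + 1) div 2)) \<le> real K" by (simp only: of_nat_le_iff)
  hence "real L \<le> real K" by linarith
  have "n < L + B * L" unfolding B_def using dividend_less_div_times L(1) by simp
  hence "real n < real (L + B * L)" by (simp only: of_nat_less_iff)
  hence "real n < real L + real B * real L" by simp
  hence "real n / 2 \<le> real B * real L" using L u \<open>0 \<le> sqrt u\<close> by linarith
  have "real q ^ L \<le> real q powr (u - sqrt u)"
    using L(2) \<open>1 < real q\<close> by (simp add: powr_realpow[symmetric])
  also have "\<dots> = real n / real q powr sqrt u"
    using \<open>0 < real n\<close> \<open>1 < real q\<close> u(1) by (simp add: powr_diff)
  finally have qL: "real q ^ L \<le> real n / real q powr sqrt u" .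
  have "2 powr sqrt u / 2 \<le> real q powr sqrt u / 2"
    using q \<open>0 \<le> sqrt u\<close> by (intro divide_right_mono powr_mono2) auto
  also have "\<dots> = (real n / 2) / (real n / real q powr sqrt u)" using \<open>0 < real n\<close> by simp
  also have "\<dots> \<le> (real B * real L) / real q ^ L"
    using \<open>real n / 2 \<le> real B * real L\<close> qL \<open>0 < real q ^ L\<close> \<open>0 < real n\<close>
    by (intro frac_le) auto
  also have "\<dots> \<le> (real B * real K) / real q ^ L"
    using \<open>real L \<le> real K\<close> \<open>0 < real q ^ L\<close> by (intro divide_right_mono mult_left_mono) auto
  also have "\<dots> = real K / real q ^ L * real B" by simp
  finally show ?thesis unfolding B_def K_def .
qed

lemma min_redundancy_ge_log_bound:
  fixes u :: real
  assumes q: "2 \<le> q" and u: "u = log q (real n)" "4 \<le> u" "2 \<le> u - sqrt u - 1" "u + sqrt u + 1 \<le> real n / 2"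
  shows "- log q (2 / (u - sqrt u - 1) + exp (- (2 powr sqrt u) / 2)) \<le> min_redundancy q n"
proof -
  define L where "L = nat \<lfloor>u - sqrt u\<rfloor>"
  define B where "B = n div L"
  define h where "h = (L + 1) div 2"
  define \<rho> where "\<rho> = real (q * (q - 1) * h) / real q ^ L"
  define \<Phi> where "\<Phi> = 1 / real h + (1 - \<rho>) ^ B"
  have "1 < real q" using q by simp
  have L: "u - sqrt u - 1 \<le> real L" "real L \<le> u - sqrt u" unfolding L_def using u(3) by linarith+
  hence "2 \<le> L" using u(3) by linarith
  have "real L \<le> 2 * real h" unfolding h_def by linarith
  hence "0 < h" using \<open>2 \<le> L\<close> by linarith
  have "q * (q - 1) * h \<le> q ^ L" unfolding h_def by (rule card_phase_shifted_prefixes_le[OF \<open>2 \<le> L\<close>])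
  hence "real (q * (q - 1) * h) \<le> real q ^ L" by (metis of_nat_le_iff of_nat_power)
  hence "\<rho> \<le> 1" unfolding \<rho>_def using \<open>1 < real q\<close> by simp
  have "0 < \<Phi>" unfolding \<Phi>_def using \<open>0 < h\<close> \<open>\<rho> \<le> 1\<close> by (simp add: add_pos_nonneg)
  have "(1 - \<rho>) ^ B \<le> exp (- \<rho>) ^ B"
    using \<open>\<rho> \<le> 1\<close> exp_ge_add_one_self[of "- \<rho>"] by (intro power_mono) auto
  also have "\<dots> = exp (- (\<rho> * real B))" by (simp add: exp_of_nat_mult[symmetric] mult.commute)
  also have "\<dots> \<le> exp (- (2 powr sqrt u) / 2)"
    using phase_shift_density_mult_blocks_ge[OF q u(1) _ u(4) \<open>2 \<le> L\<close> L(2)] u(2)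
    unfolding \<rho>_def h_def B_def by simp
  finally have "(1 - \<rho>) ^ B \<le> exp (- (2 powr sqrt u) / 2)" .
  moreover have "1 / real h \<le> 2 / (u - sqrt u - 1)"
  proof -
    have "1 / real h \<le> 2 / real L" using \<open>real L \<le> 2 * real h\<close> \<open>0 < h\<close> \<open>2 \<le> L\<close>
      by (simp add: field_simps)
    also have "\<dots> \<le> 2 / (u - sqrt u - 1)" using L(1) u(3) by (intro divide_left_mono) auto
    finally show ?thesis .
  qed
  ultimately have "log q \<Phi> \<le> log q (2 / (u - sqrt u - 1) + exp (- (2 powr sqrt u) / 2))"
    using \<open>0 < \<Phi>\<close> \<open>1 < real q\<close> unfolding \<Phi>_def by (intro log_mono) auto
  moreover have "real n - log q (real q ^ n * \<Phi>) \<le> min_redundancy q n"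
  proof (rule min_redundancy_ge)
    show "real (card C) \<le> real q ^ n * \<Phi>" if "recon_code q n C" for C
      using card_recon_code_le[OF _ \<open>2 \<le> L\<close> _ that h_def \<rho>_def] q unfolding \<Phi>_def B_def by simp
  qed (use q in simp)
  moreover have "real n - log q (real q ^ n * \<Phi>) = - log q \<Phi>"
    using \<open>0 < \<Phi>\<close> \<open>1 < real q\<close> by (simp add: log_mult_pos log_pow_cancel)
  ultimately show ?thesis by linarith
qed

lemma eventually_log_le_log_add:
  fixes f g :: "real \<Rightarrow> real"
  assumes "1 < b" "0 < \<epsilon>" and lim: "((\<lambda>u. f u / g u) \<longlongrightarrow> 1) at_top"
    and g: "eventually (\<lambda>u. 0 < g u) at_top"
  shows "eventually (\<lambda>u. log b (f u) \<le> log b (g u) + \<epsilon>) at_top"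
proof -
  have "1 < b powr \<epsilon>" using assms(1,2) by simp
  from order_tendstoD(1)[OF lim zero_less_one] order_tendstoD(2)[OF lim this] g
  show ?thesis
  proof eventually_elim
    case (elim u)
    hence "0 < f u" by (simp add: zero_less_divide_iff)
    have "log b (f u) = log b (f u / g u) + log b (g u)"
      using elim \<open>0 < f u\<close> assms(1) by (simp add: log_divide_pos)
    also have "log b (f u / g u) \<le> \<epsilon>"
      using elim assms(1) by (subst log_le_iff) auto
    finally show ?case by simp
  qed
qed

lemma filterlim_log_sequentially:
  "1 < b \<Longrightarrow> filterlim (\<lambda>n::nat. log b (real n)) at_top sequentially"
  by real_asymp

lemma eventually_log_sqrt_le_half:
  "1 < b \<Longrightarrow> eventually (\<lambda>n::nat. log b (real n) + sqrt (log b (real n)) + 1 \<le> real n / 2) sequentially"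
  by real_asymp

lemma min_redundancy_upper_asymptotic:
  assumes q: "2 \<le> q" and "0 < \<epsilon>"
  shows "eventually (\<lambda>n. min_redundancy q n \<le> log q (log q (real n)) - log q 2 + \<epsilon>) sequentially"
proof -
  define F :: real where "F = fact (q - 1)"
  define A where "A u = (u + sqrt u + 1) / 2 + F + 1" for u :: real
  define E where "E u = 2 * real q ^ 2 / real q powr sqrt u" for u :: real
  have "1 < real q" "0 \<le> F" using q by (auto simp: F_def)
  have "((\<lambda>u. (A u / (1 - E u)) / (u / 2)) \<longlongrightarrow> 1) at_top"
    unfolding A_def E_def using \<open>1 < real q\<close> \<open>0 \<le> F\<close> by real_asymp
  hence "eventually (\<lambda>u. log q (A u / (1 - E u)) \<le> log q (u / 2) + \<epsilon>) at_top"
    using \<open>1 < real q\<close> \<open>0 < \<epsilon>\<close> by (intro eventually_log_le_log_add) (auto intro: eventually_gt_at_top)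
  moreover have "eventually (\<lambda>u. E u < 1) at_top" unfolding E_def using \<open>1 < real q\<close> by real_asymp
  moreover have "eventually (\<lambda>u::real. 4 \<le> u) at_top" by (rule eventually_ge_at_top)
  ultimately have "eventually (\<lambda>u. log q (A u / (1 - E u)) \<le> log q (u / 2) + \<epsilon> \<and> E u < 1 \<and> 4 \<le> u) at_top"
    by eventually_elim blast
  from eventually_compose_filterlim[OF this filterlim_log_sequentially[OF \<open>1 < real q\<close>]]
    eventually_log_sqrt_le_half[OF \<open>1 < real q\<close>]
  show ?thesis
  proof eventually_elim
    case (elim n)
    define u where "u = log q (real n)"
    have "min_redundancy q n \<le> log q (A u / (1 - E u))"
      using min_redundancy_le_log_bound[OF q, of u n] elim unfolding A_def E_def F_def u_def by auto
    also have "\<dots> \<le> log q (u / 2) + \<epsilon>" using elim unfolding u_def by simp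
    also have "log q (u / 2) = log q u - log q 2"
      using elim \<open>1 < real q\<close> unfolding u_def by (simp add: log_divide_pos)
    finally show ?case unfolding u_def by simp
  qed
qed

lemma min_redundancy_lower_asymptotic:
  assumes q: "2 \<le> q" and "0 < \<epsilon>"
  shows "eventually (\<lambda>n. log q (log q (real n)) - log q 2 - \<epsilon> \<le> min_redundancy q n) sequentially"
proof -
  define G where "G u = 2 / (u - sqrt u - 1) + exp (- (2 powr sqrt u) / 2)" for u :: real
  have "1 < real q" using q by simp
  have "((\<lambda>u. G u / (2 / u)) \<longlongrightarrow> 1) at_top" unfolding G_def by real_asymp
  hence "eventually (\<lambda>u. log q (G u) \<le> log q (2 / u) + \<epsilon>) at_top"
    using \<open>1 < real q\<close> \<open>0 < \<epsilon>\<close> by (intro eventually_log_le_log_add) (auto intro: eventually_gt_at_top)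
  moreover have "eventually (\<lambda>u::real. 2 \<le> u - sqrt u - 1) at_top" by real_asymp
  moreover have "eventually (\<lambda>u::real. 4 \<le> u) at_top" by (rule eventually_ge_at_top)
  ultimately have "eventually (\<lambda>u. log q (G u) \<le> log q (2 / u) + \<epsilon> \<and> 2 \<le> u - sqrt u - 1 \<and> 4 \<le> u) at_top"
    by eventually_elim blast
  from eventually_compose_filterlim[OF this filterlim_log_sequentially[OF \<open>1 < real q\<close>]]
    eventually_log_sqrt_le_half[OF \<open>1 < real q\<close>]
  show ?thesis
  proof eventually_elim
    case (elim n)
    define u where "u = log q (real n)"
    have "log q u - log q 2 = - log q (2 / u)" using elim \<open>1 < real q\<close> unfolding u_def by (simp add: log_divide_pos)
    also have "\<dots> - \<epsilon> \<le> - log q (G u)" using elim unfolding u_def by simp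
    also have "\<dots> \<le> min_redundancy q n"
      using min_redundancy_ge_log_bound[OF q, of u n] elim unfolding G_def u_def by auto
    finally show ?case unfolding u_def by simp
  qed
qed

theorem corollary4:
  fixes q :: nat
  assumes "q \<ge> 2"
  shows "\<forall>\<epsilon>>0. eventually (\<lambda>n.
            log q (log q (real n)) - log q 2 - \<epsilon> \<le> min_redundancy q n \<and>
            min_redundancy q n \<le> log q (log q (real n)) + min (log q (real q - 1) - log q 2) 0 + \<epsilon>)
          sequentially"
proof (intro allI impI)
  fix \<epsilon> :: real assume "\<epsilon> > 0"
  have min_ge: "- log q 2 \<le> min (log q (real q - 1) - log q 2) 0" using assms by simp
  from min_redundancy_lower_asymptotic[OF assms \<open>\<epsilon> > 0\<close>]
    min_redundancy_upper_asymptotic[OF assms \<open>\<epsilon> > 0\<close>]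
  show "eventually (\<lambda>n.
            log q (log q (real n)) - log q 2 - \<epsilon> \<le> min_redundancy q n \<and>
            min_redundancy q n \<le> log q (log q (real n)) + min (log q (real q - 1) - log q 2) 0 + \<epsilon>)
          sequentially"
    by eventually_elim (use min_ge in linarith)
qed

end
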